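(* Let $F>1$ and $s>0$ be constants. Consider the self-adjusting $(1,\lambda)$ EA (defined in the context) with update strength $F$ and success rate $s$, using either standard bit mutation with mutation probability $p \in O(1/n) \cap n^{-O(1)}$ or the heavy-tailed mutation operator with a constant $\beta>1$. Let $f$ be any everywhere hard function with $d+1 = n^{o(\log n)}$ distinct function values. Then for every initial search point and every initial offspring population size $\lambda_0$, the expected number of generations until the algorithm optimises $f$ (i.e. until the current search point is a global optimum) is \[ O\left(d + \log(1/p_{\min})\right). \]
   Context: Search space $\{0,1\}^n$; asymptotic notation is with respect to $n\to\infty$. Since the algorithm only uses comparisons, the fitness function $f$ is assumed w.l.o.g. to take values in $\{0,1,\dots,d\}$, where $d+1$ is the number of distinct fitness values and the search points of fitness $d$ are exactly the global optima. Self-adjusting $(1,\lambda)$ EA with update strength $F$ and success rate $s$: it maintains a current search point $x$ and a real-valued offspring population size $\lambda$ (rounded to a nearest integer whenever an integer is needed); by default $x$ is uniform random and $\lambda=1$ initially. In each generation it creates $\lambda$ offspring independently by applying the mutation operator to $x$, picks an offspring $y$ of maximum fitness among them (ties broken uniformly at random), and sets $x \leftarrow y$ in any case (non-elitist). If $f(y)>f(x)$ (a success), $\lambda \leftarrow \max\{1,\lambda/F\}$; otherwise $\lambda \leftarrow F^{1/s}\lambda$. Standard bit mutation with probability $p$ flips each bit independently with probability $p$. The heavy-tailed mutation operator with parameter $\beta>1$ first draws $\chi\in\{1,\dots,n/2\}$ with $\Pr[\chi=i] = i^{-\beta}/\sum_{j=1}^{n/2} j^{-\beta}$, then performs standard bit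 mutation with probability $\chi/n$. For a search point $x$, $p_x^+$ denotes the probability that a single offspring of $x$ (one application of the mutation operator) has strictly larger fitness than $x$. $p_{\min} := \min\{p_x^+ : f(x)<d\}$ and $p_{\max} := \max\{p_x^+ : f(x)<d\}$. The function $f$ is called everywhere hard (for the algorithm) if $p_{\max} = O(n^{-\varepsilon})$ for some constant $0<\varepsilon<1$. *)

theory Defs
  imports "HOL-Probability.Probability" "HOL-Library.Landau_Symbols"
begin

text \<open>Search points of {0,1}^n are bool lists of length n.\<close>

fun std_bit_mut :: "real \<Rightarrow> bool list \<Rightarrow> bool list pmf" where
  "std_bit_mut p [] = return_pmf []"
| "std_bit_mut p (b # bs) =
     bind_pmf (bernoulli_pmf p) (\<lambda>c. map_pmf (\<lambda>r. (if c then \<not> b else b) # r) (std_bit_mut p bs))"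

definition power_law_pmf :: "nat \<Rightarrow> real \<Rightarrow> nat pmf" where
  "power_law_pmf n \<beta> = embed_pmf (\<lambda>i. if 1 \<le> i \<and> i \<le> n div 2
      then real i powr (-\<beta>) / (\<Sum>j=1..n div 2. real j powr (-\<beta>)) else 0)"

definition heavy_tailed_mut :: "real \<Rightarrow> bool list \<Rightarrow> bool list pmf" where
  "heavy_tailed_mut \<beta> x =
     bind_pmf (power_law_pmf (length x) \<beta>) (\<lambda>chi. std_bit_mut (real chi / real (length x)) x)"

fun iid_list :: "nat \<Rightarrow> 'a pmf \<Rightarrow> 'a list pmf" where
  "iid_list 0 M = return_pmf []"
| "iid_list (Suc k) M = bind_pmf M (\<lambda>y. map_pmf (\<lambda>ys. y # ys) (iid_list k M))"

definition select_best :: "(bool list \<Rightarrow> nat) \<Rightarrow> bool list list \<Rightarrow> bool list pmf" where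
  "select_best f ys = map_pmf (\<lambda>i. ys ! i)
     (pmf_of_set {i. i < length ys \<and> (\<forall>j < length ys. f (ys ! j) \<le> f (ys ! i))})"

definition ea_step :: "real \<Rightarrow> real \<Rightarrow> (bool list \<Rightarrow> bool list pmf) \<Rightarrow> (bool list \<Rightarrow> nat)
    \<Rightarrow> bool list \<times> real \<Rightarrow> (bool list \<times> real) pmf" where
  "ea_step F s mut f st = (case st of (x, lam) \<Rightarrow>
     bind_pmf (iid_list (nat (round lam)) (mut x)) (\<lambda>ys.
     map_pmf (\<lambda>y. (y, if f y > f x then max 1 (lam / F) else F powr (1 / s) * lam))
       (select_best f ys)))"

text \<open>The chain stopped (absorbed) once the current search point is optimal (fitness d).\<close>
definition ea_step_stopped :: "real \<Rightarrow> real \<Rightarrow> (bool list \<Rightarrow> bool list pmf) \<Rightarrow> (bool list \<Rightarrow> nat)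
    \<Rightarrow> nat \<Rightarrow> bool list \<times> real \<Rightarrow> (bool list \<times> real) pmf" where
  "ea_step_stopped F s mut f d st =
     (if f (fst st) = d then return_pmf st else ea_step F s mut f st)"

definition ea_dist :: "real \<Rightarrow> real \<Rightarrow> (bool list \<Rightarrow> bool list pmf) \<Rightarrow> (bool list \<Rightarrow> nat)
    \<Rightarrow> nat \<Rightarrow> bool list \<Rightarrow> real \<Rightarrow> nat \<Rightarrow> (bool list \<times> real) pmf" where
  "ea_dist F s mut f d x0 lam0 t =
     ((\<lambda>M. bind_pmf M (ea_step_stopped F s mut f d)) ^^ t) (return_pmf (x0, lam0))"

text \<open>Expected number of generations T until the current search point is optimal,
  via E[T] = sum over t of Pr[T > t] (value in ennreal, possibly infinite).\<close>
definition expected_gens :: "real \<Rightarrow> real \<Rightarrow> (bool list \<Rightarrow> bool list pmf) \<Rightarrow> (bool list \<Rightarrow> nat)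
    \<Rightarrow> nat \<Rightarrow> bool list \<Rightarrow> real \<Rightarrow> ennreal" where
  "expected_gens F s mut f d x0 lam0 =
     (\<Sum>t. ennreal (measure_pmf.prob (ea_dist F s mut f d x0 lam0 t) {st. f (fst st) \<noteq> d}))"

definition p_plus :: "(bool list \<Rightarrow> bool list pmf) \<Rightarrow> (bool list \<Rightarrow> nat) \<Rightarrow> bool list \<Rightarrow> real" where
  "p_plus mut f x = measure_pmf.prob (mut x) {y. f y > f x}"

text \<open>p_min / p_max over non-optimal search points of length n
  (conventions for the degenerate case where every point is optimal: p_min = 1, p_max = 0).\<close>
definition p_min :: "nat \<Rightarrow> (bool list \<Rightarrow> bool list pmf) \<Rightarrow> (bool list \<Rightarrow> nat) \<Rightarrow> nat \<Rightarrow> real" where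
  "p_min n mut f d = (if {x. length x = n \<and> f x < d} = {} then 1
     else Min (p_plus mut f ` {x. length x = n \<and> f x < d}))"

definition p_max :: "nat \<Rightarrow> (bool list \<Rightarrow> bool list pmf) \<Rightarrow> (bool list \<Rightarrow> nat) \<Rightarrow> nat \<Rightarrow> real" where
  "p_max n mut f d = (if {x. length x = n \<and> f x < d} = {} then 0
     else Max (p_plus mut f ` {x. length x = n \<and> f x < d}))"

end

theory Submission
  imports Defs "HOL-Real_Asymp.Real_Asymp"
begin

(* Drift analysis with the potential
     \<Phi>(x, \<lambda>) = (2s + 4) (d - f x) + 2s G(\<lambda>) + (2s + 4) d W(\<lambda>),    \<Phi> = 0 at optima.
   G(\<lambda>) = lambda_gap p_min \<lambda> = max 0 (log_F (2 F^(1/s) / p_min) - log_F \<lambda>) measures how far \<lambda> is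
   below the size 2 / p_min from which on a generation succeeds with probability at least 1/2:
   a failure lowers it by 1/s while it is positive, a success raises it by at most 1.
   W(\<lambda>) = penalty K \<Lambda> \<lambda> = K exp (- (ln \<lambda>)\<^sup>2 / (2 ln F)) below a threshold \<Lambda> of order n^(\<epsilon>/2), and 0
   above it, pays for generations in which all offspring are worse than the parent; these cost at
   most d fitness and occur with probability at most (1 - c)^(\<lambda>/2), where c is a lower bound on the
   probability of cloning. As p_max = O(n^(-\<epsilon>)), successes below \<Lambda> are too rare to undo the
   contraction of W by failures, and as d + 1 = n^(o(log n)), d W(\<lambda> / F) is negligible for \<lambda> \<ge> \<Lambda>.
   So \<Phi> decreases by at least 1 per generation in expectation, and additive drift bounds the
   expected number of generations by \<Phi>(x0, \<lambda>0) = O(d + log (1 / p_min)). *)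

lemma additive_drift_pmf:
  fixes step :: "'s \<Rightarrow> 's pmf" and \<Phi> :: "'s \<Rightarrow> ennreal"
  assumes init: "I s0"
    and invariant: "\<And>s s'. I s \<Longrightarrow> s' \<in> set_pmf (step s) \<Longrightarrow> I s'"
    and drift: "\<And>s. I s \<Longrightarrow> \<not> T s \<Longrightarrow> (\<integral>\<^sup>+ s'. \<Phi> s' \<partial>step s) + 1 \<le> \<Phi> s"
    and target: "\<And>s. I s \<Longrightarrow> T s \<Longrightarrow> (\<integral>\<^sup>+ s'. \<Phi> s' \<partial>step s) \<le> \<Phi> s"
  shows "(\<Sum>t. emeasure (((\<lambda>M. bind_pmf M step) ^^ t) (return_pmf s0)) {s. \<not> T s}) \<le> \<Phi> s0"
proof -
  define D where "D t = ((\<lambda>M. bind_pmf M step) ^^ t) (return_pmf s0)" for t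
  define E where "E t = (\<integral>\<^sup>+ s. \<Phi> s \<partial>D t)" for t
  have D_Suc: "D (Suc t) = bind_pmf (D t) step" for t
    by (simp add: D_def)
  have I_D: "\<forall>s\<in>set_pmf (D t). I s" for t
    by (induction t) (auto simp: D_Suc D_def init dest: invariant)
  have E_Suc: "E (Suc t) + emeasure (D t) {s. \<not> T s} \<le> E t" for t
  proof -
    have "E (Suc t) + emeasure (D t) {s. \<not> T s}
        = (\<integral>\<^sup>+ s. (\<integral>\<^sup>+ s'. \<Phi> s' \<partial>step s) + indicator {s. \<not> T s} s \<partial>D t)"
      by (simp add: E_def D_Suc nn_integral_add)
    also have "\<dots> \<le> E t"
      unfolding E_def
    proof (intro nn_integral_mono_AE AE_pmfI)
      fix s assume "s \<in> set_pmf (D t)"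
      with I_D have "I s" by blast
      then show "(\<integral>\<^sup>+ s'. \<Phi> s' \<partial>step s) + indicator {s. \<not> T s} s \<le> \<Phi> s"
        using drift target by (cases "T s") auto
    qed
    finally show ?thesis .
  qed
  have sum_E: "(\<Sum>t<N. emeasure (D t) {s. \<not> T s}) + E N \<le> E 0" for N
  proof (induction N)
    case (Suc N)
    have "(\<Sum>t<Suc N. emeasure (D t) {s. \<not> T s}) + E (Suc N)
        = (\<Sum>t<N. emeasure (D t) {s. \<not> T s}) + (E (Suc N) + emeasure (D N) {s. \<not> T s})"
      by (simp add: algebra_simps)
    also have "\<dots> \<le> (\<Sum>t<N. emeasure (D t) {s. \<not> T s}) + E N"
      using E_Suc by (intro add_left_mono)
    finally show ?case using Suc.IH by (rule order.trans)
  qed simp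
  have "E 0 = \<Phi> s0"
    by (simp add: E_def D_def nn_integral_return_pmf)
  then have "(\<Sum>t<N. emeasure (D t) {s. \<not> T s}) \<le> \<Phi> s0" for N
    using order.trans[OF add_increasing2[OF zero_le order_refl] sum_E[of N]] by simp
  then show ?thesis
    by (simp add: D_def suminf_eq_SUP SUP_least)
qed

lemma nn_integral_le_expectation:
  fixes g h :: "'a \<Rightarrow> real"
  assumes "finite (set_pmf M)"
    and "\<And>x. x \<in> set_pmf M \<Longrightarrow> 0 \<le> h x" "\<And>x. x \<in> set_pmf M \<Longrightarrow> h x \<le> g x"
  shows "(\<integral>\<^sup>+ x. ennreal (h x) \<partial>M) \<le> ennreal (measure_pmf.expectation M g)"
proof -
  have "(\<integral>\<^sup>+ x. ennreal (h x) \<partial>M) \<le> (\<integral>\<^sup>+ x. ennreal (g x) \<partial>M)"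
    using assms(3) by (intro nn_integral_mono_AE AE_pmfI ennreal_leI)
  also have "\<dots> = ennreal (measure_pmf.expectation M g)"
    using assms by (intro nn_integral_eq_integral integrable_measure_pmf_finite AE_pmfI)
      (auto intro: order.trans)
  finally show ?thesis .
qed

section \<open>Selecting the best offspring\<close>

lemma set_pmf_iid_list: "ys \<in> set_pmf (iid_list k M) \<Longrightarrow> length ys = k \<and> set ys \<subseteq> set_pmf M"
  by (induction k arbitrary: ys) (auto, blast)

lemma emeasure_iid_list_all:
  "emeasure (iid_list k M) {ys. \<forall>y\<in>set ys. P y} = ennreal (measure_pmf.prob M {y. P y} ^ k)"
proof (induction k)
  case 0
  then show ?case by (simp add: measure_pmf.emeasure_eq_measure)
next
  case (Suc k)
  have "emeasure (iid_list (Suc k) M) {ys. \<forall>y\<in>set ys. P y}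
      = (\<integral>\<^sup>+ y. emeasure (map_pmf (Cons y) (iid_list k M)) {ys. \<forall>y\<in>set ys. P y} \<partial>M)"
    by simp
  also have "\<dots> = (\<integral>\<^sup>+ y. indicator {y. P y} y * ennreal (measure_pmf.prob M {y. P y} ^ k) \<partial>M)"
    by (intro nn_integral_cong) (simp add: Suc emeasure_map_pmf vimage_def indicator_def)
  also have "\<dots> = ennreal (measure_pmf.prob M {y. P y} ^ Suc k)"
    by (simp add: nn_integral_multc measure_pmf.emeasure_eq_measure ennreal_mult'[symmetric] mult.commute)
  finally show ?case .
qed

lemma prob_iid_list_all:
  "measure_pmf.prob (iid_list k M) {ys. \<forall>y\<in>set ys. P y} = measure_pmf.prob M {y. P y} ^ k"
  using emeasure_iid_list_all[of k M P] by (simp add: measure_pmf.emeasure_eq_measure)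

lemma select_best_maximal:
  assumes "ys \<noteq> []" "y \<in> set_pmf (select_best f ys)"
  shows "y \<in> set ys" "\<And>z. z \<in> set ys \<Longrightarrow> f z \<le> f y"
proof -
  define S where "S = {i. i < length ys \<and> (\<forall>j < length ys. f (ys ! j) \<le> f (ys ! i))}"
  have "Max (f ` set ys) \<in> f ` set ys"
    using assms(1) by (intro Max_in) auto
  then obtain z where z: "z \<in> set ys" "f z = Max (f ` set ys)"
    by auto
  then obtain i where "i < length ys" "ys ! i = z"
    by (auto simp: in_set_conv_nth)
  with z have "i \<in> S"
    by (auto simp: S_def)
  then have "S \<noteq> {}" "finite S"
    by (auto simp: S_def)
  with assms(2) obtain i' where "i' \<in> S" "y = ys ! i'"
    by (auto simp: select_best_def S_def[symmetric])
  then show "y \<in> set ys" "\<And>z. z \<in> set ys \<Longrightarrow> f z \<le> f y"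
    by (auto simp: S_def in_set_conv_nth)
qed

definition best_offspring :: "nat \<Rightarrow> bool list pmf \<Rightarrow> (bool list \<Rightarrow> nat) \<Rightarrow> bool list pmf" where
  "best_offspring k M f = bind_pmf (iid_list k M) (select_best f)"

lemma ea_step_eq_best_offspring:
  "ea_step F s mut f (x, lam) =
     map_pmf (\<lambda>y. (y, if f x < f y then max 1 (lam / F) else F powr (1 / s) * lam))
       (best_offspring (nat (round lam)) (mut x) f)"
  by (simp add: ea_step_def best_offspring_def map_bind_pmf)

lemma set_pmf_best_offspring:
  assumes "1 \<le> k" "y \<in> set_pmf (best_offspring k M f)"
  shows "y \<in> set_pmf M"
proof -
  obtain ys where ys: "ys \<in> set_pmf (iid_list k M)" "y \<in> set_pmf (select_best f ys)"
    using assms(2) by (auto simp: best_offspring_def)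
  with assms(1) have "ys \<noteq> []"
    using set_pmf_iid_list by fastforce
  then show ?thesis
    using select_best_maximal(1) ys set_pmf_iid_list by blast
qed

lemma prob_best_offspring_downward_closed:
  assumes k: "1 \<le> k" and down: "\<And>a b. a \<le> b \<Longrightarrow> P b \<Longrightarrow> P a"
  shows "measure_pmf.prob (best_offspring k M f) {y. P (f y)} = measure_pmf.prob M {y. P (f y)} ^ k"
proof -
  let ?all = "{ys. \<forall>y\<in>set ys. P (f y)}"
  have select: "emeasure (select_best f ys) {y. P (f y)} = indicator ?all ys"
    if "ys \<in> set_pmf (iid_list k M)" for ys
  proof -
    have "ys \<noteq> []"
      using set_pmf_iid_list[OF that] k by auto
    then have "P (f y) \<longleftrightarrow> ys \<in> ?all" if "y \<in> set_pmf (select_best f ys)" for y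
      using select_best_maximal[OF _ that] down by auto
    then show ?thesis
      by (cases "ys \<in> ?all") (auto simp: measure_pmf.emeasure_eq_measure measure_pmf_zero_iff
          measure_pmf.prob_eq_1 AE_measure_pmf_iff)
  qed
  have "emeasure (best_offspring k M f) {y. P (f y)} = (\<integral>\<^sup>+ ys. indicator ?all ys \<partial>iid_list k M)"
    unfolding best_offspring_def emeasure_bind_pmf by (intro nn_integral_cong_AE AE_pmfI select)
  also have "\<dots> = emeasure (iid_list k M) ?all"
    by (rule nn_integral_indicator) simp
  finally show ?thesis
    by (simp add: measure_pmf.emeasure_eq_measure prob_iid_list_all)
qed

lemma prob_best_offspring_improves:
  assumes "1 \<le> k"
  shows "measure_pmf.prob (best_offspring k M f) {y. t < f y}
       = 1 - (1 - measure_pmf.prob M {y. t < f y}) ^ k"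
  using measure_pmf.prob_compl[of "{y. f y \<le> t}" "best_offspring k M f"]
    measure_pmf.prob_compl[of "{y. f y \<le> t}" M]
    prob_best_offspring_downward_closed[OF assms, of "\<lambda>v. v \<le> t"]
  by (simp add: Diff_eq Compl_eq not_le)

lemma prob_best_offspring_worse:
  "1 \<le> k \<Longrightarrow> measure_pmf.prob (best_offspring k M f) {y. f y < t} = measure_pmf.prob M {y. f y < t} ^ k"
  by (rule prob_best_offspring_downward_closed) auto

lemma nat_round_bounds:
  fixes lam :: real
  assumes "1 \<le> lam"
  shows "lam / 2 \<le> nat (round lam)" "nat (round lam) \<le> 2 * lam" "1 \<le> nat (round lam)"
proof -
  have "real (nat (round lam)) = of_int (round lam)"
    using assms of_int_round_ge[of lam] by simp
  with assms show "lam / 2 \<le> nat (round lam)" "nat (round lam) \<le> 2 * lam" "1 \<le> nat (round lam)"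
    using of_int_round_ge[of lam] of_int_round_le[of lam] by linarith+
qed

section \<open>Mutation operators\<close>

lemma finite_bool_lists_length: "finite {xs :: bool list. length xs = n}"
  using finite_lists_length_eq[of "UNIV :: bool set" n] by simp

lemma length_std_bit_mut: "y \<in> set_pmf (std_bit_mut p x) \<Longrightarrow> length y = length x"
  by (induction x arbitrary: y) auto

lemma set_pmf_std_bit_mut:
  assumes "0 < p" "p < 1"
  shows "set_pmf (std_bit_mut p x) = {y. length y = length x}"
proof (induction x)
  case (Cons b bs)
  show ?case
  proof (intro set_eqI iffI)
    fix y :: "bool list"
    assume "y \<in> {y. length y = length (b # bs)}"
    then obtain h r where "y = h # r" "length r = length bs"
      by (cases y) auto
    with Cons assms show "y \<in> set_pmf (std_bit_mut p (b # bs))"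
      by (auto intro!: bexI[of _ "h \<noteq> b"])
  qed (use length_std_bit_mut in blast)
qed simp

lemma pmf_std_bit_mut_self:
  assumes "0 \<le> p" "p \<le> 1"
  shows "pmf (std_bit_mut p x) x = (1 - p) ^ length x"
proof (induction x)
  case (Cons b bs)
  have "pmf (map_pmf (Cons (\<not> b)) (std_bit_mut p bs)) (b # bs) = 0"
    by (auto simp: pmf_eq_0_set_pmf)
  moreover have "pmf (map_pmf (Cons b) (std_bit_mut p bs)) (b # bs) = pmf (std_bit_mut p bs) bs"
    by (rule pmf_map_inj') (auto simp: inj_def)
  ultimately show ?case
    using Cons assms by (simp add: pmf_bind)
qed simp

lemma exp_le_one_minus_power:
  assumes "0 \<le> p" "p \<le> 1 / 2"
  shows "exp (- 2 * p * real n) \<le> (1 - p) ^ n"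
proof -
  have "- p - 2 * p\<^sup>2 \<le> ln (1 - p)"
    using assms by (intro ln_one_minus_pos_lower_bound) auto
  moreover have "2 * p\<^sup>2 \<le> p"
    using assms mult_left_mono[of p "1 / 2" p] by (simp add: power2_eq_square)
  ultimately have "real n * (- 2 * p) \<le> real n * ln (1 - p)"
    by (intro mult_left_mono) auto
  then have "exp (- 2 * p * real n) \<le> exp (real n * ln (1 - p))"
    by (simp add: algebra_simps)
  also have "\<dots> = (1 - p) ^ n"
    using assms by (simp add: exp_of_nat_mult)
  finally show ?thesis .
qed

lemma pmf_power_law_pmf:
  assumes "2 \<le> n"
  shows "pmf (power_law_pmf n \<beta>) i = (if 1 \<le> i \<and> i \<le> n div 2
      then real i powr (-\<beta>) / (\<Sum>j=1..n div 2. real j powr (-\<beta>)) else 0)"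
proof -
  define Z where "Z = (\<Sum>j=1..n div 2. real j powr (-\<beta>))"
  define g where "g i = (if 1 \<le> i \<and> i \<le> n div 2 then real i powr (-\<beta>) / Z else 0)" for i
  have "Z > 0"
    unfolding Z_def using assms by (intro sum_pos) auto
  then have g_nonneg: "0 \<le> g i" for i
    by (simp add: g_def)
  have "(\<integral>\<^sup>+i. ennreal (g i) \<partial>count_space UNIV) = (\<Sum>i\<in>{1..n div 2}. ennreal (g i))"
    by (rule nn_integral_count_space') (auto simp: g_def)
  also have "\<dots> = ennreal (\<Sum>i\<in>{1..n div 2}. g i)"
    using g_nonneg by (rule sum_ennreal)
  also have "(\<Sum>i\<in>{1..n div 2}. g i) = (\<Sum>i\<in>{1..n div 2}. real i powr (-\<beta>)) / Z"
    by (simp add: g_def sum_divide_distrib)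
  also have "\<dots> = 1"
    using \<open>Z > 0\<close> by (simp add: Z_def)
  finally have "(\<integral>\<^sup>+i. ennreal (g i) \<partial>count_space UNIV) = 1"
    by simp
  then have "pmf (embed_pmf g) i = g i"
    by (intro pmf_embed_pmf g_nonneg)
  moreover have "power_law_pmf n \<beta> = embed_pmf g"
    unfolding power_law_pmf_def g_def[abs_def] Z_def by (rule refl)
  ultimately show ?thesis
    by (simp add: g_def Z_def)
qed

lemma set_pmf_power_law_pmf: "2 \<le> n \<Longrightarrow> set_pmf (power_law_pmf n \<beta>) \<subseteq> {1..n div 2}"
  by (auto simp: set_pmf_eq pmf_power_law_pmf split: if_splits)

lemma pmf_power_law_pmf_one_ge:
  assumes "2 \<le> n" "1 < \<beta>"
  shows "1 / (\<Sum>j. real j powr (-\<beta>)) \<le> pmf (power_law_pmf n \<beta>) 1"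
proof -
  have "0 < (\<Sum>j=1..n div 2. real j powr (-\<beta>))"
    using assms by (intro sum_pos) auto
  moreover have "(\<Sum>j=1..n div 2. real j powr (-\<beta>)) \<le> (\<Sum>j. real j powr (-\<beta>))"
    using assms by (intro sum_le_suminf) (auto simp: summable_real_powr_iff)
  ultimately show ?thesis
    using assms by (simp add: pmf_power_law_pmf frac_le)
qed

lemma length_heavy_tailed_mut: "y \<in> set_pmf (heavy_tailed_mut \<beta> x) \<Longrightarrow> length y = length x"
  by (auto simp: heavy_tailed_mut_def dest: length_std_bit_mut)

lemma pmf_heavy_tailed_mut_ge:
  assumes "2 \<le> length x"
  shows "pmf (std_bit_mut (1 / length x) x) y * pmf (power_law_pmf (length x) \<beta>) 1
       \<le> pmf (heavy_tailed_mut \<beta> x) y"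
proof -
  let ?n = "length x"
  have "pmf (heavy_tailed_mut \<beta> x) y
      = (\<Sum>i\<in>{1..?n div 2}. pmf (std_bit_mut (i / ?n) x) y * pmf (power_law_pmf ?n \<beta>) i)"
    unfolding heavy_tailed_mut_def pmf_bind
    by (rule integral_measure_pmf_real) (use set_pmf_power_law_pmf[OF assms] in force)+
  moreover have "pmf (std_bit_mut (1 / ?n) x) y * pmf (power_law_pmf ?n \<beta>) 1
      \<le> (\<Sum>i\<in>{1..?n div 2}. pmf (std_bit_mut (i / ?n) x) y * pmf (power_law_pmf ?n \<beta>) i)"
    using assms member_le_sum[of 1 "{1..?n div 2}"
        "\<lambda>i. pmf (std_bit_mut (i / ?n) x) y * pmf (power_law_pmf ?n \<beta>) i"]
    by simp
  ultimately show ?thesis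
    by simp
qed

locale mutation_operator =
  fixes n :: nat and c :: real and mut :: "bool list \<Rightarrow> bool list pmf"
  assumes c_pos: "0 < c" and c_less_1: "c < 1"
    and length_mut: "\<And>x y. length x = n \<Longrightarrow> y \<in> set_pmf (mut x) \<Longrightarrow> length y = n"
    and pmf_mut_self: "\<And>x. length x = n \<Longrightarrow> c \<le> pmf (mut x) x"
    and pmf_mut_pos: "\<And>x y. length x = n \<Longrightarrow> length y = n \<Longrightarrow> 0 < pmf (mut x) y"

lemma mutation_operator_std_bit_mut:
  fixes p :: "nat \<Rightarrow> real"
  assumes "p \<in> O(\<lambda>n. 1 / real n)" and "\<forall>\<^sub>F n in sequentially. 0 < p n"
  shows "\<exists>c. \<forall>\<^sub>F n in sequentially. mutation_operator n c (std_bit_mut (p n))"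
proof -
  obtain M where M: "0 < M" and p_le: "\<forall>\<^sub>F n in sequentially. norm (p n) \<le> M * norm (1 / real n)"
    using landau_o.bigE[OF assms(1)] by blast
  have "\<forall>\<^sub>F n in sequentially. 2 * M + 1 \<le> real n"
    by real_asymp
  with p_le assms(2) have "\<forall>\<^sub>F n in sequentially. mutation_operator n (exp (- 2 * M)) (std_bit_mut (p n))"
  proof eventually_elim
    case (elim n)
    then have "1 \<le> real n"
      using M by linarith
    with elim have rate_le: "p n * real n \<le> M"
      by (auto simp: field_simps)
    moreover have "p n * (2 * M + 1) \<le> p n * real n"
      using elim by (intro mult_left_mono) auto
    ultimately have "p n * (2 * M + 1) \<le> 1 / 2 * (2 * M + 1)"
      by argo
    then have half: "p n \<le> 1 / 2"
      using M by (simp only: mult_le_cancel_right_pos)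
    have "exp (- 2 * M) \<le> exp (- 2 * p n * real n)"
      using rate_le by simp
    also have "\<dots> \<le> (1 - p n) ^ n"
      using exp_le_one_minus_power[of "p n" n] elim half by simp
    finally have "exp (- 2 * M) \<le> (1 - p n) ^ n" .
    with elim half show ?case
      by unfold_locales (auto simp: M pmf_std_bit_mut_self set_pmf_std_bit_mut pmf_positive_iff
          dest: length_std_bit_mut)
  qed
  then show ?thesis ..
qed

lemma mutation_operator_heavy_tailed_mut:
  assumes "1 < \<beta>"
  shows "\<exists>c. \<forall>n\<ge>2. mutation_operator n c (heavy_tailed_mut \<beta>)"
proof -
  define Z where "Z = (\<Sum>j. real j powr (-\<beta>))"
  have "(\<Sum>j\<in>{1}. real j powr (-\<beta>)) \<le> Z"
    unfolding Z_def using assms by (intro sum_le_suminf) (auto simp: summable_real_powr_iff)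
  then have Z: "1 \<le> Z"
    by simp
  have "mutation_operator n (exp (- 2) / Z) (heavy_tailed_mut \<beta>)" if n: "2 \<le> n" for n
  proof
    fix x y :: "bool list"
    assume x: "length x = n"
    have rate: "0 < 1 / real n" "1 / real n < 1" "1 / real n \<le> 1 / 2"
      using n by auto
    have power_law: "1 / Z \<le> pmf (power_law_pmf n \<beta>) 1"
      using pmf_power_law_pmf_one_ge[OF n assms] by (simp add: Z_def)
    then have "0 < pmf (power_law_pmf n \<beta>) 1"
      using Z by (smt (verit) divide_pos_pos)
    have "exp (- 2) \<le> pmf (std_bit_mut (1 / n) x) x"
      using exp_le_one_minus_power[of "1 / real n" n] rate n x by (simp add: pmf_std_bit_mut_self)
    with power_law have "exp (- 2) * (1 / Z) \<le> pmf (std_bit_mut (1 / n) x) x * pmf (power_law_pmf n \<beta>) 1"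
      using Z by (intro mult_mono) auto
    then show "exp (- 2) / Z \<le> pmf (heavy_tailed_mut \<beta> x) x"
      using pmf_heavy_tailed_mut_ge[of x x \<beta>] n x by simp
    assume y: "length y = n"
    have "0 < pmf (std_bit_mut (1 / n) x) y * pmf (power_law_pmf n \<beta>) 1"
      using rate x y \<open>0 < pmf (power_law_pmf n \<beta>) 1\<close>
      by (intro mult_pos_pos) (auto simp: pmf_positive_iff set_pmf_std_bit_mut)
    then show "0 < pmf (heavy_tailed_mut \<beta> x) y"
      using pmf_heavy_tailed_mut_ge[of x y \<beta>] n x by simp
  next
    show "0 < exp (- 2) / Z" "exp (- 2) / Z < 1"
      using Z by (auto simp: divide_less_eq intro: less_le_trans[of _ 1])
  qed (use length_heavy_tailed_mut in auto)
  then show ?thesis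
    by blast
qed

lemma eventually_mutation_operator:
  fixes p :: "nat \<Rightarrow> real" and mut :: "nat \<Rightarrow> bool list \<Rightarrow> bool list pmf"
  assumes "((\<forall>n x. mut n x = std_bit_mut (p n) x)
          \<and> p \<in> O(\<lambda>n. 1 / real n)
          \<and> (\<exists>k. \<forall>\<^sub>F n in sequentially. p n \<ge> real n powr (- k)))
       \<or> (\<exists>\<beta>>1. \<forall>n x. mut n x = heavy_tailed_mut \<beta> x)"
  shows "\<exists>c. \<forall>\<^sub>F n in sequentially. mutation_operator n c (mut n)"
  using assms
proof (elim disjE conjE exE)
  fix k :: real
  assume mut: "\<forall>n x. mut n x = std_bit_mut (p n) x" and p_bigo: "p \<in> O(\<lambda>n. 1 / real n)"
    and lower: "\<forall>\<^sub>F n in sequentially. real n powr (- k) \<le> p n"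
  from eventually_gt_at_top[of 0] lower have "\<forall>\<^sub>F n in sequentially. 0 < p n"
    by eventually_elim (smt (verit) of_nat_0_less_iff powr_gt_zero)
  moreover have "mut = (\<lambda>n. std_bit_mut (p n))"
    using mut by blast
  ultimately show ?thesis
    using mutation_operator_std_bit_mut[OF p_bigo] by simp
next
  fix \<beta> :: real
  assume "1 < \<beta>" and "\<forall>n x. mut n x = heavy_tailed_mut \<beta> x"
  then have "mut = (\<lambda>n. heavy_tailed_mut \<beta>)"
    by blast
  with mutation_operator_heavy_tailed_mut[OF \<open>1 < \<beta>\<close>] show ?thesis
    by (auto simp: eventually_sequentially)
qed

lemma finite_non_optimal: "finite {x :: bool list. length x = n \<and> f x < d}"
  by (rule finite_subset[OF _ finite_bool_lists_length[of n]]) auto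

lemma p_min_le_p_plus:
  assumes "length x = n" "f x < d"
  shows "p_min n mut f d \<le> p_plus mut f x"
proof -
  have "p_min n mut f d = Min (p_plus mut f ` {x. length x = n \<and> f x < d})"
    using assms by (auto simp: p_min_def)
  then show ?thesis
    using assms finite_non_optimal[of n f d] by simp
qed

lemma p_plus_le_p_max:
  assumes "length x = n" "f x < d"
  shows "p_plus mut f x \<le> p_max n mut f d"
proof -
  have "p_max n mut f d = Max (p_plus mut f ` {x. length x = n \<and> f x < d})"
    using assms by (auto simp: p_max_def)
  then show ?thesis
    using assms finite_non_optimal[of n f d] by simp
qed

lemma p_min_le_1: "p_min n mut f d \<le> 1"
proof (cases "\<exists>x. length x = n \<and> f x < d")
  case True
  then obtain x where "length x = n" "f x < d"
    by blast
  then have "p_min n mut f d \<le> p_plus mut f x"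
    by (rule p_min_le_p_plus)
  then show ?thesis
    by (simp add: p_plus_def order.trans[OF _ measure_pmf.prob_le_1])
qed (simp add: p_min_def)

context mutation_operator
begin

lemma p_plus_pos:
  assumes "length x = n" "length y = n" "f x < f y"
  shows "0 < p_plus mut f x"
  using assms pmf_mut_pos[of x y] by (auto simp: p_plus_def pmf_positive_iff intro: measure_pmf_posI)

lemma prob_mut_worse_le:
  fixes f :: "bool list \<Rightarrow> nat"
  assumes "length x = n"
  shows "measure_pmf.prob (mut x) {y. f y < f x} \<le> 1 - c"
proof -
  have "measure_pmf.prob (mut x) {y. f y < f x} + pmf (mut x) x
      = measure_pmf.prob (mut x) ({y. f y < f x} \<union> {x})"
    by (subst measure_pmf.finite_measure_Union) (auto simp: measure_pmf_single)
  also have "\<dots> \<le> 1"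
    by simp
  finally show ?thesis
    using pmf_mut_self[OF assms] by linarith
qed

lemma one_minus_c_power_le_powr:
  assumes "lam / 2 \<le> k"
  shows "(1 - c) ^ k \<le> (1 - c) powr (lam / 2)"
  using c_pos c_less_1 assms by (simp add: powr_realpow[symmetric] powr_mono')

end

section \<open>The potential\<close>

lemma one_minus_power_le:
  fixes q :: real
  assumes "0 \<le> q" "q \<le> 1"
  shows "1 - (1 - q) ^ k \<le> k * q"
  using Bernoulli_inequality[of "- q" k] assms by simp

lemma one_minus_power_ge_half:
  fixes q :: real
  assumes "0 \<le> q" "q \<le> 1" "1 \<le> k * q"
  shows "1 / 2 \<le> 1 - (1 - q) ^ k"
proof -
  have "(1 - q) ^ k \<le> exp (- q) ^ k"
    using assms exp_ge_add_one_self[of "- q"] by (intro power_mono) auto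
  also have "\<dots> = exp (- (k * q))"
    by (simp add: exp_of_nat_mult[symmetric])
  also have "\<dots> \<le> exp (- 1)"
    using assms by simp
  also have "\<dots> \<le> 1 / 2"
    using exp_ge_add_one_self[of 1] by (simp add: exp_minus field_simps)
  finally show ?thesis
    by simp
qed

lemma powr_exp_ln_sq_bounded:
  fixes b t :: real
  assumes "0 < b" "b < 1" "0 < t"
  shows "\<exists>B. \<forall>\<mu>\<ge>1. b powr (\<mu> / 2) * exp (t * (ln \<mu>)\<^sup>2) \<le> B"
proof -
  have "((\<lambda>\<mu>. b powr (\<mu> / 2) * exp (t * (ln \<mu>)\<^sup>2)) \<longlongrightarrow> 0) at_top"
    using assms by real_asymp
  from order_tendstoD(2)[OF this, of 1] obtain N
    where N: "\<And>\<mu>. N \<le> \<mu> \<Longrightarrow> b powr (\<mu> / 2) * exp (t * (ln \<mu>)\<^sup>2) < 1"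
    by (auto simp: eventually_at_top_linorder)
  have "b powr (\<mu> / 2) * exp (t * (ln \<mu>)\<^sup>2) \<le> max 1 (exp (t * (ln (max 1 N))\<^sup>2))"
    if "1 \<le> \<mu>" for \<mu>
  proof (cases "N \<le> \<mu>")
    case True
    with N show ?thesis
      by (smt (verit))
  next
    case False
    with that have "(ln \<mu>)\<^sup>2 \<le> (ln (max 1 N))\<^sup>2"
      by (intro power_mono) auto
    with assms have "exp (t * (ln \<mu>)\<^sup>2) \<le> exp (t * (ln (max 1 N))\<^sup>2)"
      by simp
    moreover have "b powr (\<mu> / 2) \<le> 1"
      using assms that by (intro powr_le1) auto
    ultimately have "b powr (\<mu> / 2) * exp (t * (ln \<mu>)\<^sup>2) \<le> 1 * exp (t * (ln (max 1 N))\<^sup>2)"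
      by (intro mult_mono) auto
    then show ?thesis
      by simp
  qed
  then show ?thesis
    by blast
qed

lemma few_values_times_exp_neg_sq_tendsto_0:
  fixes d :: "nat \<Rightarrow> nat" and L :: "nat \<Rightarrow> real"
  assumes "0 < t" "0 < e"
    and few_values: "(\<lambda>n. ln (real (d n + 1))) \<in> o(\<lambda>n. (ln (real n))\<^sup>2)"
    and L: "\<forall>\<^sub>F n in sequentially. e * ln (real n) \<le> L n"
  shows "(\<lambda>n. real (d n) * exp (- t * (L n)\<^sup>2)) \<longlonglongrightarrow> 0"
proof (rule tendsto_sandwich[where f = "\<lambda>_. 0"])
  define \<delta> where "\<delta> = t * e\<^sup>2 / 2"
  have \<delta>: "0 < \<delta>"
    using assms by (simp add: \<delta>_def)
  have "\<forall>\<^sub>F n in sequentially. ln (real (d n + 1)) \<le> \<delta> * (ln (real n))\<^sup>2"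
    using landau_o.smallD[OF few_values \<delta>] by simp
  with L eventually_ge_at_top[of 1]
  show "\<forall>\<^sub>F n in sequentially. real (d n) * exp (- t * (L n)\<^sup>2) \<le> exp (- \<delta> * (ln (real n))\<^sup>2)"
  proof eventually_elim
    case (elim n)
    define X where "X = ln (real n)"
    have "0 \<le> e * X"
      using elim assms by (simp add: X_def)
    with elim have "(e * X)\<^sup>2 \<le> (L n)\<^sup>2"
      by (intro power_mono) (auto simp: X_def)
    then have "2 * \<delta> * X\<^sup>2 \<le> t * (L n)\<^sup>2"
      using assms by (simp add: \<delta>_def power_mult_distrib mult_left_mono)
    then have "exp (- t * (L n)\<^sup>2) \<le> exp (- (2 * \<delta> * X\<^sup>2))"
      by simp
    moreover have "real (d n) \<le> exp (\<delta> * X\<^sup>2)"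
    proof -
      have "real (d n) + 1 = exp (ln (real (d n + 1)))"
        by simp
      also have "\<dots> \<le> exp (\<delta> * X\<^sup>2)"
        unfolding exp_le_cancel_iff using elim by (simp add: X_def)
      finally show ?thesis
        by linarith
    qed
    ultimately have "real (d n) * exp (- t * (L n)\<^sup>2) \<le> exp (\<delta> * X\<^sup>2) * exp (- (2 * \<delta> * X\<^sup>2))"
      by (intro mult_mono) auto
    also have "\<dots> = exp (- \<delta> * X\<^sup>2)"
      by (simp add: exp_add[symmetric])
    finally show ?case
      by (simp add: X_def)
  qed
  show "(\<lambda>n. exp (- \<delta> * (ln (real n))\<^sup>2)) \<longlonglongrightarrow> 0"
    using \<delta> by real_asymp
qed auto

locale ea_params =
  fixes F s :: real
  assumes F_gt_1: "1 < F" and s_pos: "0 < s"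
begin

definition up_factor :: real where
  "up_factor = F powr (1 / s)"

definition \<theta> :: real where
  "\<theta> = 1 / (2 * ln F)"

definition \<kappa> :: real where
  "\<kappa> = 1 - exp (- \<theta> * (ln up_factor)\<^sup>2)"

lemma up_factor_gt_1: "1 < up_factor"
  unfolding up_factor_def using F_gt_1 s_pos by (intro gr_one_powr) auto

lemma \<theta>_pos: "0 < \<theta>"
  using F_gt_1 by (simp add: \<theta>_def)

lemma \<kappa>_pos: "0 < \<kappa>"
  using \<theta>_pos up_factor_gt_1 by (simp add: \<kappa>_def)

lemma \<kappa>_le_1: "\<kappa> \<le> 1"
  by (simp add: \<kappa>_def)

definition lambda_gap :: "real \<Rightarrow> real \<Rightarrow> real" where
  "lambda_gap p \<mu> = max 0 (log F (2 * up_factor / p) - log F (max 1 \<mu>))"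

lemma lambda_gap_nonneg: "0 \<le> lambda_gap p \<mu>"
  by (simp add: lambda_gap_def)

lemma lambda_gap_success:
  assumes "1 \<le> lam"
  shows "lambda_gap p (max 1 (lam / F)) \<le> lambda_gap p lam + 1"
proof -
  have "log F lam - 1 \<le> log F (max 1 (lam / F))"
  proof (cases "1 \<le> lam / F")
    case True
    then show ?thesis
      using F_gt_1 assms by (simp add: log_divide max_absorb2)
  next
    case False
    then have "log F lam < 1"
      using F_gt_1 assms by (subst log_less_one_cancel_iff) (auto simp: field_simps)
    moreover have "0 \<le> log F (max 1 (lam / F))"
      using F_gt_1 by (simp add: zero_le_log_cancel_iff)
    ultimately show ?thesis
      by linarith
  qed
  then show ?thesis
    using assms by (simp add: lambda_gap_def max_absorb2)
qed

lemma lambda_gap_failure: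
  assumes "1 \<le> lam"
  shows "lambda_gap p (up_factor * lam) \<le> lambda_gap p lam"
proof -
  have "lam \<le> up_factor * lam"
    using up_factor_gt_1 assms by simp
  then have "log F lam \<le> log F (max 1 (up_factor * lam))"
    using F_gt_1 assms by (simp add: le_max_iff_disj)
  then show ?thesis
    using assms by (auto simp: lambda_gap_def max_absorb2 intro: max.mono)
qed

text \<open>For \<open>\<lambda> \<le> 2 / p\<close> the gap stays positive after the step, so it shrinks by the full
  \<open>log F up_factor = 1 / s\<close>.\<close>
lemma lambda_gap_failure_small:
  assumes "1 \<le> lam" "0 < p" "lam \<le> 2 / p"
  shows "lambda_gap p (up_factor * lam) \<le> lambda_gap p lam - 1 / s"
proof -
  have log_up: "log F up_factor = 1 / s"
    using F_gt_1 by (simp add: up_factor_def log_powr)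
  have "log F (p * lam) \<le> log F 2"
    using F_gt_1 assms by (simp add: field_simps)
  then have "0 \<le> log F (2 * up_factor / p) - log F (up_factor * lam)"
    using F_gt_1 up_factor_gt_1 assms by (simp add: log_mult log_divide)
  moreover have "log F (up_factor * lam) = 1 / s + log F lam"
    using log_up up_factor_gt_1 assms by (simp add: log_mult)
  moreover have "1 \<le> up_factor * lam"
    using mult_mono[of 1 up_factor 1 lam] up_factor_gt_1 assms by simp
  ultimately show ?thesis
    using assms by (simp add: lambda_gap_def max_absorb2)
qed

lemma lambda_gap_le:
  assumes "0 < p" "p \<le> 1"
  shows "lambda_gap p \<mu> \<le> log F (2 * up_factor) + ln (1 / p) / ln F"
proof -
  have "log F (2 * up_factor / p) = log F (2 * up_factor) + ln (1 / p) / ln F"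
    using assms up_factor_gt_1 by (simp add: log_def ln_div diff_divide_distrib)
  moreover have "0 \<le> log F (2 * up_factor)" "0 \<le> ln (1 / p) / ln F"
    using assms F_gt_1 up_factor_gt_1 by auto
  ultimately show ?thesis
    using F_gt_1 by (simp add: lambda_gap_def)
qed

lemma lambda_gap_drift:
  fixes k :: nat and lam :: real
  assumes "1 \<le> lam" "lam / 2 \<le> k" "0 < p" "p \<le> q" "q \<le> 1"
  defines "P \<equiv> 1 - (1 - q) ^ k"
  shows "2 * s * (P * lambda_gap p (max 1 (lam / F)) + (1 - P) * lambda_gap p (up_factor * lam))
       \<le> 2 * s * lambda_gap p lam + (2 * s + 4) * P - 2"
proof -
  let ?G = "lambda_gap p lam"
  have P: "0 \<le> P" "P \<le> 1"
    using assms by (auto simp: P_def intro: power_le_one)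
  have success: "P * lambda_gap p (max 1 (lam / F)) \<le> P * (?G + 1)"
    using lambda_gap_success[OF assms(1)] P by (intro mult_left_mono)
  show ?thesis
  proof (cases "lam \<le> 2 / p")
    case True
    have "(1 - P) * lambda_gap p (up_factor * lam) \<le> (1 - P) * (?G - 1 / s)"
      using lambda_gap_failure_small[OF assms(1,3) True] P by (intro mult_left_mono) auto
    with success have "2 * s * (P * lambda_gap p (max 1 (lam / F)) + (1 - P) * lambda_gap p (up_factor * lam))
        \<le> 2 * s * (P * (?G + 1) + (1 - P) * (?G - 1 / s))"
      using s_pos by (intro mult_left_mono) auto
    also have "\<dots> = 2 * s * ?G + (2 * s + 2) * P - 2"
      using s_pos by (simp add: field_simps)
    also have "\<dots> \<le> 2 * s * ?G + (2 * s + 4) * P - 2"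
      using P by (simp add: mult_right_mono)
    finally show ?thesis .
  next
    case False
    have "1 \<le> lam / 2 * p"
      using False assms(3) by (simp add: field_simps)
    also have "\<dots> \<le> k * q"
      using assms by (intro mult_mono) auto
    finally have "1 / 2 \<le> P"
      unfolding P_def using assms by (intro one_minus_power_ge_half) auto
    have "(1 - P) * lambda_gap p (up_factor * lam) \<le> (1 - P) * ?G"
      using lambda_gap_failure[OF assms(1)] P by (intro mult_left_mono) auto
    with success have "2 * s * (P * lambda_gap p (max 1 (lam / F)) + (1 - P) * lambda_gap p (up_factor * lam))
        \<le> 2 * s * (P * (?G + 1) + (1 - P) * ?G)"
      using s_pos by (intro mult_left_mono) auto
    also have "\<dots> = 2 * s * ?G + (2 * s + 4) * P - 4 * P"
      by (simp add: field_simps)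
    finally show ?thesis
      using \<open>1 / 2 \<le> P\<close> by linarith
  qed
qed

definition penalty :: "real \<Rightarrow> real \<Rightarrow> real \<Rightarrow> real" where
  "penalty K \<Lambda> \<mu> = (if \<mu> < \<Lambda> then K * exp (- \<theta> * (ln (max 1 \<mu>))\<^sup>2) else 0)"

lemma penalty_nonneg: "0 \<le> K \<Longrightarrow> 0 \<le> penalty K \<Lambda> \<mu>"
  by (simp add: penalty_def)

lemma penalty_le: "0 \<le> K \<Longrightarrow> penalty K \<Lambda> \<mu> \<le> K"
  using \<theta>_pos by (simp add: penalty_def mult_left_le)

lemma penalty_mult_le:
  assumes "0 \<le> K" "1 \<le> u" "1 \<le> lam"
  shows "penalty K \<Lambda> (u * lam) \<le> exp (- \<theta> * (ln u)\<^sup>2) * penalty K \<Lambda> lam"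
proof (cases "u * lam < \<Lambda>")
  case True
  have "lam \<le> u * lam" "1 \<le> u * lam"
    using assms mult_mono[of 1 u 1 lam] by auto
  with True have "lam < \<Lambda>"
    by simp
  have "(ln u)\<^sup>2 + (ln lam)\<^sup>2 \<le> (ln u + ln lam)\<^sup>2"
    using assms by (simp add: power2_sum)
  then have "\<theta> * ((ln u)\<^sup>2 + (ln lam)\<^sup>2) \<le> \<theta> * (ln u + ln lam)\<^sup>2"
    using \<theta>_pos by (intro mult_left_mono) auto
  then have "- \<theta> * (ln (u * lam))\<^sup>2 \<le> - \<theta> * (ln u)\<^sup>2 + - \<theta> * (ln lam)\<^sup>2"
    using assms by (simp add: ln_mult algebra_simps)
  then have "exp (- \<theta> * (ln (u * lam))\<^sup>2) \<le> exp (- \<theta> * (ln u)\<^sup>2) * exp (- \<theta> * (ln lam)\<^sup>2)"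
    by (simp add: exp_add[symmetric])
  then have "K * exp (- \<theta> * (ln (u * lam))\<^sup>2) \<le> exp (- \<theta> * (ln u)\<^sup>2) * (K * exp (- \<theta> * (ln lam)\<^sup>2))"
    using assms(1) mult_left_mono by (fastforce simp: mult.left_commute)
  with True \<open>lam < \<Lambda>\<close> \<open>1 \<le> u * lam\<close> show ?thesis
    using assms by (simp add: penalty_def max_absorb2)
qed (use assms in \<open>simp add: penalty_def\<close>)

text \<open>The choice \<open>\<theta> = 1 / (2 ln F)\<close> makes the exponent \<open>\<theta> (ln \<lambda>)\<^sup>2\<close> drop by at most
  \<open>ln \<lambda>\<close> when \<open>\<lambda>\<close> is divided by \<open>F\<close>.\<close>
lemma penalty_success:
  assumes "0 \<le> K" "1 \<le> lam" "lam < \<Lambda>"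
  shows "penalty K \<Lambda> (max 1 (lam / F)) \<le> lam * penalty K \<Lambda> lam"
proof -
  have lnF: "0 < ln F" "2 * \<theta> * ln F = 1"
    using F_gt_1 by (auto simp: \<theta>_def)
  have "lam / F \<le> lam"
    using F_gt_1 assms by (simp add: divide_le_eq)
  have "\<theta> * (ln lam)\<^sup>2 - ln lam \<le> \<theta> * (ln (max 1 (lam / F)))\<^sup>2"
  proof (cases "1 \<le> lam / F")
    case True
    have "(ln lam)\<^sup>2 - 2 * ln lam * ln F \<le> (ln lam - ln F)\<^sup>2"
      by (simp add: power2_diff)
    then have "\<theta> * ((ln lam)\<^sup>2 - 2 * ln lam * ln F) \<le> \<theta> * (ln lam - ln F)\<^sup>2"
      using \<theta>_pos by (intro mult_left_mono) auto
    moreover have "\<theta> * ((ln lam)\<^sup>2 - 2 * ln lam * ln F) = \<theta> * (ln lam)\<^sup>2 - ln lam"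
      using lnF by (simp add: algebra_simps)
    ultimately show ?thesis
      using True F_gt_1 assms by (simp add: ln_div max_absorb2)
  next
    case False
    then have "ln lam \<le> ln F"
      using F_gt_1 assms by (simp add: field_simps)
    then have "\<theta> * (ln lam * ln lam) \<le> \<theta> * (ln F * ln lam)"
      using assms \<theta>_pos by (intro mult_left_mono mult_right_mono) auto
    moreover have "\<theta> * (ln F * ln lam) = ln lam / 2"
      using lnF by (simp add: algebra_simps)
    ultimately have "\<theta> * (ln lam)\<^sup>2 \<le> ln lam / 2"
      by (simp add: power2_eq_square)
    moreover have "0 \<le> \<theta> * (ln lam)\<^sup>2"
      using \<theta>_pos by simp
    ultimately have "\<theta> * (ln lam)\<^sup>2 \<le> ln lam"
      by linarith
    then show ?thesis
      using False by simp
  qed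
  then have "exp (- \<theta> * (ln (max 1 (lam / F)))\<^sup>2) \<le> exp (ln lam) * exp (- \<theta> * (ln lam)\<^sup>2)"
    by (simp add: exp_add[symmetric])
  then show ?thesis
    using assms \<open>lam / F \<le> lam\<close> by (simp add: penalty_def max_absorb2 mult_left_mono algebra_simps)
qed

lemma exists_penalty_scale:
  assumes "0 < c" "c < 1"
  shows "\<exists>K\<ge>0. \<forall>\<mu>\<ge>1. (1 - c) powr (\<mu> / 2) \<le> \<kappa> * K * exp (- \<theta> * (ln \<mu>)\<^sup>2) / 4"
proof -
  obtain B where B: "\<And>\<mu>. 1 \<le> \<mu> \<Longrightarrow> (1 - c) powr (\<mu> / 2) * exp (\<theta> * (ln \<mu>)\<^sup>2) \<le> B"
    using powr_exp_ln_sq_bounded[of "1 - c" \<theta>] assms \<theta>_pos by auto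
  have "0 \<le> B"
    using B[of 1] by (smt (verit) exp_gt_zero powr_ge_zero zero_le_mult_iff)
  show ?thesis
  proof (intro exI conjI allI impI)
    show "0 \<le> 4 * B / \<kappa>"
      using \<open>0 \<le> B\<close> \<kappa>_pos by simp
    fix \<mu> :: real
    assume "1 \<le> \<mu>"
    have "(1 - c) powr (\<mu> / 2) = (1 - c) powr (\<mu> / 2) * exp (\<theta> * (ln \<mu>)\<^sup>2) * exp (- \<theta> * (ln \<mu>)\<^sup>2)"
      by (simp add: exp_minus)
    also have "\<dots> \<le> B * exp (- \<theta> * (ln \<mu>)\<^sup>2)"
      using B[OF \<open>1 \<le> \<mu>\<close>] by (intro mult_right_mono) auto
    also have "\<dots> = \<kappa> * (4 * B / \<kappa>) * exp (- \<theta> * (ln \<mu>)\<^sup>2) / 4"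
      using \<kappa>_pos by simp
    finally show "(1 - c) powr (\<mu> / 2) \<le> \<kappa> * (4 * B / \<kappa>) * exp (- \<theta> * (ln \<mu>)\<^sup>2) / 4" .
  qed
qed

lemma eventually_exists_threshold:
  fixes P :: "nat \<Rightarrow> real" and d :: "nat \<Rightarrow> nat" and K :: real
  assumes "0 < \<epsilon>" and P: "P \<in> O(\<lambda>n. real n powr (- \<epsilon>))"
    and few_values: "(\<lambda>n. ln (real (d n + 1))) \<in> o(\<lambda>n. (ln (real n))\<^sup>2)"
  shows "\<forall>\<^sub>F n in sequentially. \<exists>\<Lambda>. F \<le> \<Lambda> \<and> \<Lambda>\<^sup>2 * P n \<le> \<kappa> / 16
           \<and> 2 * K * d n * exp (- \<theta> * (ln (\<Lambda> / F))\<^sup>2) \<le> 1 / (2 * s + 4)"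
proof -
  obtain M where M: "0 < M" and P_le: "\<forall>\<^sub>F n in sequentially. norm (P n) \<le> M * norm (real n powr (- \<epsilon>))"
    using landau_o.bigE[OF P] by blast
  define a where "a = sqrt (\<kappa> / (16 * M))"
  have a: "0 < a" "a\<^sup>2 * M = \<kappa> / 16"
    using \<kappa>_pos M by (auto simp: a_def)
  define \<Lambda> where "\<Lambda> n = a * real n powr (\<epsilon> / 2)" for n :: nat
  have F_le: "\<forall>\<^sub>F n in sequentially. F \<le> \<Lambda> n"
    unfolding \<Lambda>_def using a \<open>0 < \<epsilon>\<close> by real_asymp
  have "(\<lambda>n. real (d n) * exp (- \<theta> * (ln (\<Lambda> n / F))\<^sup>2)) \<longlonglongrightarrow> 0"
  proof (rule few_values_times_exp_neg_sq_tendsto_0[OF \<theta>_pos _ few_values])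
    show "0 < \<epsilon> / 4"
      using \<open>0 < \<epsilon>\<close> by simp
    show "\<forall>\<^sub>F n in sequentially. \<epsilon> / 4 * ln (real n) \<le> ln (\<Lambda> n / F)"
      unfolding \<Lambda>_def using a \<open>0 < \<epsilon>\<close> F_gt_1 by real_asymp
  qed
  then have "(\<lambda>n. 2 * K * (real (d n) * exp (- \<theta> * (ln (\<Lambda> n / F))\<^sup>2))) \<longlonglongrightarrow> 0"
    by (rule tendsto_mult_right_zero)
  then have small: "\<forall>\<^sub>F n in sequentially. 2 * K * (real (d n) * exp (- \<theta> * (ln (\<Lambda> n / F))\<^sup>2)) < 1 / (2 * s + 4)"
    using s_pos by (intro order_tendstoD(2)) auto
  from P_le F_le small eventually_gt_at_top[of 0] show ?thesis
  proof eventually_elim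
    case (elim n)
    have "real n powr (- \<epsilon>) * (real n powr (\<epsilon> / 2))\<^sup>2 = 1"
      using elim by (simp add: power2_eq_square powr_add[symmetric])
    then have "P n * (real n powr (\<epsilon> / 2))\<^sup>2 \<le> M"
      using elim mult_right_mono[of "P n" "M * real n powr (- \<epsilon>)" "(real n powr (\<epsilon> / 2))\<^sup>2"]
      by (simp add: mult.assoc)
    then have "a\<^sup>2 * (P n * (real n powr (\<epsilon> / 2))\<^sup>2) \<le> a\<^sup>2 * M"
      by (intro mult_left_mono) auto
    also have "a\<^sup>2 * (P n * (real n powr (\<epsilon> / 2))\<^sup>2) = (\<Lambda> n)\<^sup>2 * P n"
      by (simp add: \<Lambda>_def power_mult_distrib)
    finally have "(\<Lambda> n)\<^sup>2 * P n \<le> \<kappa> / 16"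
      using a by simp
    with elim show ?case
      by (intro exI[of _ "\<Lambda> n"]) (simp add: mult.assoc)
  qed
qed

definition runtime_const :: "real \<Rightarrow> real" where
  "runtime_const K = (2 * s + 4) * (1 + K) + 2 * s * log F (2 * up_factor) + 2 * s / ln F"

lemma runtime_const_nonneg: "0 \<le> K \<Longrightarrow> 0 \<le> runtime_const K"
  using F_gt_1 s_pos up_factor_gt_1 by (simp add: runtime_const_def)

end

section \<open>Drift of the potential\<close>

locale ea_drift = ea_params F s + mutation_operator n c mut
  for F s :: real and n :: nat and c :: real and mut :: "bool list \<Rightarrow> bool list pmf" +
  fixes f :: "bool list \<Rightarrow> nat" and d :: nat and K \<Lambda> :: real
  assumes fitness_range: "f ` {x. length x = n} = {0..d}"
    and K_nonneg: "0 \<le> K"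
    and all_worse_le_penalty: "\<And>\<mu>. 1 \<le> \<mu> \<Longrightarrow> (1 - c) powr (\<mu> / 2) \<le> \<kappa> * K * exp (- \<theta> * (ln \<mu>)\<^sup>2) / 4"
    and F_le_threshold: "F \<le> \<Lambda>"
    and threshold_p_max: "\<Lambda>\<^sup>2 * p_max n mut f d \<le> \<kappa> / 16"
    and penalty_beyond_threshold: "2 * K * d * exp (- \<theta> * (ln (\<Lambda> / F))\<^sup>2) \<le> 1 / (2 * s + 4)"
begin

lemma fitness_le: "length x = n \<Longrightarrow> f x \<le> d"
  using fitness_range by auto

lemma p_min_pos: "0 < p_min n mut f d"
proof (cases "{x. length x = n \<and> f x < d} = {}")
  case False
  have "d \<in> f ` {x. length x = n}"
    using fitness_range by simp
  then obtain y where "length y = n" "f y = d"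
    by auto
  moreover from False have "p_min n mut f d \<in> p_plus mut f ` {x. length x = n \<and> f x < d}"
    unfolding p_min_def using finite_non_optimal[of n f d] by (simp del: Collect_empty_eq)
  ultimately show ?thesis
    using p_plus_pos by auto
qed (simp add: p_min_def)

lemma penalty_drift_below_threshold:
  fixes k :: nat and lam :: real
  assumes lam: "1 \<le> lam" "lam < \<Lambda>" and k: "lam / 2 \<le> k" "k \<le> 2 * lam"
    and q: "0 \<le> q" "q \<le> 1" "q \<le> p_max n mut f d" and \<rho>: "\<rho> \<le> (1 - c) ^ k"
  defines "P \<equiv> 1 - (1 - q) ^ k"
  shows "\<rho> + P * penalty K \<Lambda> (max 1 (lam / F)) + (1 - P) * penalty K \<Lambda> (up_factor * lam)
       \<le> penalty K \<Lambda> lam"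
proof -
  let ?W = "penalty K \<Lambda> lam"
  have W: "?W = K * exp (- \<theta> * (ln lam)\<^sup>2)" "0 \<le> ?W"
    using lam K_nonneg by (auto simp: penalty_def max_absorb2)
  have P: "0 \<le> P" "P \<le> 1" "P \<le> 2 * lam * p_max n mut f d"
  proof -
    show "0 \<le> P" "P \<le> 1"
      using q by (auto simp: P_def intro: power_le_one)
    have "P \<le> k * q"
      unfolding P_def using q(1,2) by (rule one_minus_power_le)
    also have "\<dots> \<le> 2 * lam * p_max n mut f d"
      using k q by (intro mult_mono) auto
    finally show "P \<le> 2 * lam * p_max n mut f d" .
  qed
  have "\<rho> \<le> (1 - c) powr (lam / 2)"
    using \<rho> one_minus_c_power_le_powr[OF k(1)] by linarith
  also have "\<dots> \<le> \<kappa> * ?W / 4"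
    using all_worse_le_penalty[OF lam(1)] W by (simp add: mult.assoc)
  finally have worse: "\<rho> \<le> \<kappa> * ?W / 4" .
  have "lam\<^sup>2 * p_max n mut f d \<le> \<Lambda>\<^sup>2 * p_max n mut f d"
    using lam q by (intro mult_right_mono power_mono) auto
  then have lam_p_max: "lam\<^sup>2 * p_max n mut f d \<le> \<kappa> / 16"
    using threshold_p_max by linarith
  have "P * penalty K \<Lambda> (max 1 (lam / F)) \<le> (2 * lam * p_max n mut f d) * (lam * ?W)"
    using P penalty_success[OF K_nonneg lam] by (intro mult_mono) (auto simp: penalty_nonneg K_nonneg)
  also have "\<dots> = 2 * (lam\<^sup>2 * p_max n mut f d) * ?W"
    by (simp add: power2_eq_square algebra_simps)
  also have "\<dots> \<le> 2 * (\<kappa> / 16) * ?W"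
    using lam_p_max W by (intro mult_right_mono mult_left_mono) auto
  finally have success: "P * penalty K \<Lambda> (max 1 (lam / F)) \<le> \<kappa> * ?W / 8"
    by simp
  have "(1 - P) * penalty K \<Lambda> (up_factor * lam) \<le> (1 - P) * ((1 - \<kappa>) * ?W)"
    using penalty_mult_le[OF K_nonneg _ lam(1)] up_factor_gt_1 P by (intro mult_left_mono) (auto simp: \<kappa>_def)
  also have "\<dots> \<le> (1 - \<kappa>) * ?W"
    using P W \<kappa>_le_1 by (intro mult_left_le_one_le) auto
  finally have failure: "(1 - P) * penalty K \<Lambda> (up_factor * lam) \<le> (1 - \<kappa>) * ?W" .
  have "\<kappa> * ?W / 4 + \<kappa> * ?W / 8 + (1 - \<kappa>) * ?W = ?W - 5 / 8 * (\<kappa> * ?W)"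
    by (simp add: algebra_simps)
  moreover have "0 \<le> \<kappa> * ?W"
    using \<kappa>_pos W by simp
  ultimately show ?thesis
    using worse success failure by linarith
qed

lemma penalty_success_beyond_threshold:
  assumes "\<Lambda> \<le> lam"
  shows "penalty K \<Lambda> (max 1 (lam / F)) \<le> K * exp (- \<theta> * (ln (\<Lambda> / F))\<^sup>2)"
proof (cases "max 1 (lam / F) < \<Lambda>")
  case True
  have "\<Lambda> / F \<le> max 1 (lam / F)"
    using assms F_gt_1 by (simp add: divide_right_mono le_max_iff_disj)
  moreover have "1 \<le> \<Lambda> / F"
    using F_le_threshold F_gt_1 by simp
  ultimately have "(ln (\<Lambda> / F))\<^sup>2 \<le> (ln (max 1 (lam / F)))\<^sup>2"
    by (intro power_mono) auto
  with True show ?thesis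
    using \<theta>_pos K_nonneg by (simp add: penalty_def mult_left_mono)
qed (auto simp: penalty_def K_nonneg)

lemma all_worse_beyond_threshold:
  fixes k :: nat
  assumes "\<Lambda> \<le> lam" "lam / 2 \<le> k"
  shows "(1 - c) ^ k \<le> K * exp (- \<theta> * (ln (\<Lambda> / F))\<^sup>2)"
proof -
  have \<Lambda>: "1 \<le> \<Lambda> / F" "1 \<le> \<Lambda>"
    using F_le_threshold F_gt_1 by auto
  have "(1 - c) ^ k \<le> (1 - c) powr (\<Lambda> / 2)"
    using one_minus_c_power_le_powr[OF assms(2)] c_pos c_less_1 assms(1)
      powr_mono'[of "\<Lambda> / 2" "lam / 2" "1 - c"]
    by linarith
  also have "\<dots> \<le> \<kappa> * (K * exp (- \<theta> * (ln \<Lambda>)\<^sup>2)) / 4"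
    using all_worse_le_penalty[OF \<Lambda>(2)] by (simp add: mult.assoc)
  also have "\<dots> \<le> K * exp (- \<theta> * (ln \<Lambda>)\<^sup>2)"
    using \<kappa>_pos \<kappa>_le_1 K_nonneg mult_left_le_one_le[of "K * exp (- \<theta> * (ln \<Lambda>)\<^sup>2)" \<kappa>]
      mult_nonneg_nonneg[OF K_nonneg exp_ge_zero, of "- \<theta> * (ln \<Lambda>)\<^sup>2"]
    by linarith
  also have "\<dots> \<le> K * exp (- \<theta> * (ln (\<Lambda> / F))\<^sup>2)"
  proof -
    have "(ln (\<Lambda> / F))\<^sup>2 \<le> (ln \<Lambda>)\<^sup>2"
      using \<Lambda> F_gt_1 by (intro power_mono) (auto simp: ln_div)
    then show ?thesis
      using \<theta>_pos K_nonneg by (simp add: mult_left_mono)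
  qed
  finally show ?thesis .
qed

lemma penalty_drift_beyond_threshold:
  fixes k :: nat and lam :: real
  assumes lam: "1 \<le> lam" "\<Lambda> \<le> lam" and k: "lam / 2 \<le> k" and \<rho>: "\<rho> \<le> (1 - c) ^ k"
    and P: "0 \<le> P" "P \<le> 1"
  shows "(2 * s + 4) * d * (\<rho> + P * penalty K \<Lambda> (max 1 (lam / F)) + (1 - P) * penalty K \<Lambda> (up_factor * lam))
       \<le> 1"
proof -
  define E where "E = K * exp (- \<theta> * (ln (\<Lambda> / F))\<^sup>2)"
  have "\<Lambda> \<le> up_factor * lam"
    using up_factor_gt_1 lam by (smt (verit) mult_le_cancel_right1)
  then have failure: "penalty K \<Lambda> (up_factor * lam) = 0"
    by (simp add: penalty_def)
  have "\<rho> + P * penalty K \<Lambda> (max 1 (lam / F)) \<le> 2 * E"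
    using \<rho> all_worse_beyond_threshold[OF lam(2) k] penalty_success_beyond_threshold[OF lam(2)] P
      mult_left_le_one_le[of "penalty K \<Lambda> (max 1 (lam / F))" P]
    by (smt (verit) E_def penalty_nonneg K_nonneg)
  then have "(2 * s + 4) * d * (\<rho> + P * penalty K \<Lambda> (max 1 (lam / F))) \<le> (2 * s + 4) * d * (2 * E)"
    using s_pos by (intro mult_left_mono) auto
  also have "\<dots> = (2 * s + 4) * (2 * K * d * exp (- \<theta> * (ln (\<Lambda> / F))\<^sup>2))"
    by (simp add: E_def)
  also have "\<dots> \<le> 1"
    using penalty_beyond_threshold s_pos by (simp add: field_simps)
  finally show ?thesis
    using failure by simp
qed

lemma penalty_drift:
  fixes k :: nat and lam :: real
  assumes "1 \<le> lam" "lam / 2 \<le> k" "k \<le> 2 * lam"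
    and "0 \<le> q" "q \<le> 1" "q \<le> p_max n mut f d" "\<rho> \<le> (1 - c) ^ k"
  defines "P \<equiv> 1 - (1 - q) ^ k"
  shows "(2 * s + 4) * d * (\<rho> + P * penalty K \<Lambda> (max 1 (lam / F)) + (1 - P) * penalty K \<Lambda> (up_factor * lam))
       \<le> (2 * s + 4) * d * penalty K \<Lambda> lam + 1"
proof (cases "lam < \<Lambda>")
  case True
  have "(2 * s + 4) * d * (\<rho> + P * penalty K \<Lambda> (max 1 (lam / F)) + (1 - P) * penalty K \<Lambda> (up_factor * lam))
      \<le> (2 * s + 4) * d * penalty K \<Lambda> lam"
    unfolding P_def using penalty_drift_below_threshold[OF assms(1) True assms(2-7)] s_pos
    by (intro mult_left_mono) auto
  then show ?thesis
    by linarith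
next
  case False
  have "0 \<le> P" "P \<le> 1"
    using assms by (auto simp: P_def intro: power_le_one)
  with False show ?thesis
    using penalty_drift_beyond_threshold[OF assms(1) _ assms(2,7)] by (simp add: penalty_def)
qed

definition lambda_potential :: "real \<Rightarrow> real" where
  "lambda_potential \<mu> = 2 * s * lambda_gap (p_min n mut f d) \<mu> + (2 * s + 4) * d * penalty K \<Lambda> \<mu>"

definition potential :: "bool list \<times> real \<Rightarrow> real" where
  "potential st = (if f (fst st) = d then 0
     else (2 * s + 4) * (real d - f (fst st)) + lambda_potential (snd st))"

lemma lambda_potential_nonneg: "0 \<le> lambda_potential \<mu>"
  using s_pos by (simp add: lambda_potential_def lambda_gap_nonneg penalty_nonneg K_nonneg)

lemma potential_nonneg: "f x \<le> d \<Longrightarrow> 0 \<le> potential (x, \<mu>)"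
  using s_pos lambda_potential_nonneg by (simp add: potential_def)

lemma lambda_potential_drift:
  fixes k :: nat and lam :: real
  assumes "1 \<le> lam" "lam / 2 \<le> k" "k \<le> 2 * lam"
    and "p_min n mut f d \<le> q" "q \<le> 1" "q \<le> p_max n mut f d" "\<rho> \<le> (1 - c) ^ k"
  defines "P \<equiv> 1 - (1 - q) ^ k"
  shows "- (2 * s + 4) * P + (2 * s + 4) * d * \<rho> + P * lambda_potential (max 1 (lam / F))
       + (1 - P) * lambda_potential (up_factor * lam) + 1 \<le> lambda_potential lam"
proof -
  have "0 \<le> q"
    using p_min_pos assms by linarith
  have "2 * s * (P * lambda_gap (p_min n mut f d) (max 1 (lam / F))
      + (1 - P) * lambda_gap (p_min n mut f d) (up_factor * lam))
      \<le> 2 * s * lambda_gap (p_min n mut f d) lam + (2 * s + 4) * P - 2"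
    unfolding P_def using p_min_pos assms by (intro lambda_gap_drift) auto
  moreover have "(2 * s + 4) * d * (\<rho> + P * penalty K \<Lambda> (max 1 (lam / F))
      + (1 - P) * penalty K \<Lambda> (up_factor * lam)) \<le> (2 * s + 4) * d * penalty K \<Lambda> lam + 1"
    unfolding P_def using \<open>0 \<le> q\<close> assms by (intro penalty_drift) auto
  ultimately show ?thesis
    by (simp add: lambda_potential_def algebra_simps)
qed

lemma ea_step_invariant:
  assumes "length x = n" "1 \<le> lam" "(y, lam') \<in> set_pmf (ea_step F s mut f (x, lam))"
  shows "length y = n" "1 \<le> lam'"
proof -
  have k: "1 \<le> nat (round lam)"
    using nat_round_bounds[OF assms(2)] by simp
  obtain z where z: "z \<in> set_pmf (best_offspring (nat (round lam)) (mut x) f)"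
    and yz: "(y, lam') = (z, if f x < f z then max 1 (lam / F) else F powr (1 / s) * lam)"
    using assms(3) by (auto simp: ea_step_eq_best_offspring)
  show "length y = n"
    using yz length_mut[OF assms(1) set_pmf_best_offspring[OF k z]] by simp
  have "1 \<le> up_factor * lam"
    using mult_mono[of 1 up_factor 1 lam] up_factor_gt_1 assms(2) by simp
  then show "1 \<le> lam'"
    using yz by (auto simp: up_factor_def)
qed

lemma potential_after_generation_le:
  assumes "f x < d" "f y \<le> d"
  shows "potential (y, if f x < f y then max 1 (lam / F) else up_factor * lam)
       \<le> (2 * s + 4) * (real d - f x) + lambda_potential (up_factor * lam)
         + (lambda_potential (max 1 (lam / F)) - lambda_potential (up_factor * lam) - (2 * s + 4))
           * indicator {y. f x < f y} y
         + (2 * s + 4) * d * indicator {y. f y < f x} y"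
proof -
  consider "f x < f y" | "f y = f x" | "f y < f x"
    by linarith
  then show ?thesis
  proof cases
    case 1
    then have "(2 * s + 4) * (real d - f y) \<le> (2 * s + 4) * (real d - f x) - (2 * s + 4)"
      using s_pos mult_left_mono[of "real d - f y" "real d - f x - 1" "2 * s + 4"]
      by (simp add: algebra_simps)
    moreover have "0 \<le> (2 * s + 4) * (real d - f y)"
      using assms s_pos by simp
    ultimately show ?thesis
      using 1 lambda_potential_nonneg[of "max 1 (lam / F)"] by (auto simp: potential_def)
  next
    case 2
    then show ?thesis
      using assms by (auto simp: potential_def)
  next
    case 3
    have "(2 * s + 4) * (real d - f y) \<le> (2 * s + 4) * d"
      using s_pos by (intro mult_left_mono) auto
    moreover have "0 \<le> (2 * s + 4) * (real d - f x)"
      using assms s_pos by simp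
    ultimately show ?thesis
      using 3 lambda_potential_nonneg by (auto simp: potential_def)
  qed
qed

lemma potential_drift:
  assumes x: "length x = n" "f x < d" and lam: "1 \<le> lam"
  shows "(\<integral>\<^sup>+ st. ennreal (potential st) \<partial>ea_step F s mut f (x, lam)) + 1 \<le> ennreal (potential (x, lam))"
proof -
  define k where "k = nat (round lam)"
  define Y where "Y = best_offspring k (mut x) f"
  define P where "P = measure_pmf.prob Y {y. f x < f y}"
  define \<rho> where "\<rho> = measure_pmf.prob Y {y. f y < f x}"
  define g where "g y = (2 * s + 4) * (real d - f x) + lambda_potential (up_factor * lam)
      + (lambda_potential (max 1 (lam / F)) - lambda_potential (up_factor * lam) - (2 * s + 4))
        * indicator {y. f x < f y} y
      + (2 * s + 4) * d * indicator {y. f y < f x} y" for y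
  have k: "lam / 2 \<le> k" "k \<le> 2 * lam" "1 \<le> k"
    using nat_round_bounds[OF lam] by (auto simp: k_def)
  have Y_length: "length y = n" if "y \<in> set_pmf Y" for y
    using length_mut[OF x(1) set_pmf_best_offspring[OF k(3)]] that by (simp add: Y_def)
  have finite_Y: "finite (set_pmf Y)"
    using Y_length by (intro finite_subset[OF _ finite_bool_lists_length[of n]]) auto
  have P: "P = 1 - (1 - p_plus mut f x) ^ k"
    using prob_best_offspring_improves[OF k(3)] by (simp add: P_def Y_def p_plus_def)
  have \<rho>: "\<rho> \<le> (1 - c) ^ k"
    using prob_best_offspring_worse[OF k(3)] prob_mut_worse_le[OF x(1)]
    by (simp add: \<rho>_def Y_def power_mono)
  have step: "0 \<le> potential (y, if f x < f y then max 1 (lam / F) else up_factor * lam)"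
    "potential (y, if f x < f y then max 1 (lam / F) else up_factor * lam) \<le> g y"
    if "y \<in> set_pmf Y" for y
    using potential_nonneg potential_after_generation_le[OF x(2)] fitness_le[OF Y_length[OF that]]
    by (auto simp: g_def)
  have expectation: "measure_pmf.expectation Y g = (2 * s + 4) * (real d - f x) + lambda_potential (up_factor * lam)
      + (lambda_potential (max 1 (lam / F)) - lambda_potential (up_factor * lam) - (2 * s + 4)) * P
      + (2 * s + 4) * d * \<rho>"
    unfolding g_def[abs_def] P_def \<rho>_def by (simp add: measure_pmf.emeasure_eq_measure)
  have "(\<integral>\<^sup>+ st. ennreal (potential st) \<partial>ea_step F s mut f (x, lam))
      \<le> ennreal (measure_pmf.expectation Y g)"
    unfolding ea_step_eq_best_offspring nn_integral_map_pmf up_factor_def[symmetric] k_def[symmetric] Y_def[symmetric]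
    using finite_Y step by (intro nn_integral_le_expectation)
  then have "(\<integral>\<^sup>+ st. ennreal (potential st) \<partial>ea_step F s mut f (x, lam)) + 1
      \<le> ennreal (measure_pmf.expectation Y g) + 1"
    by (rule add_right_mono)
  also have "\<dots> = ennreal (measure_pmf.expectation Y g + 1)"
    using step by (subst ennreal_plus) (auto intro!: integral_nonneg_AE AE_pmfI intro: order.trans)
  also have "\<dots> \<le> ennreal (potential (x, lam))"
    using lambda_potential_drift[OF lam k(1,2) p_min_le_p_plus[of x n f d mut, OF x] _
        p_plus_le_p_max[of x n f d mut, OF x] \<rho>] x
    unfolding expectation P by (intro ennreal_leI) (simp add: potential_def p_plus_def algebra_simps)
  finally show ?thesis .
qed

lemma expected_gens_le_potential:
  assumes "length x0 = n" "1 \<le> lam0"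
  shows "expected_gens F s mut f d x0 lam0 \<le> ennreal (potential (x0, lam0))"
proof -
  let ?I = "\<lambda>st :: bool list \<times> real. length (fst st) = n \<and> 1 \<le> snd st"
  let ?T = "\<lambda>st :: bool list \<times> real. f (fst st) = d"
  have "(\<Sum>t. emeasure (((\<lambda>M. bind_pmf M (ea_step_stopped F s mut f d)) ^^ t) (return_pmf (x0, lam0)))
      {st. \<not> ?T st}) \<le> ennreal (potential (x0, lam0))"
  proof (rule additive_drift_pmf[where I = ?I])
    fix st st'
    assume "?I st" and st': "st' \<in> set_pmf (ea_step_stopped F s mut f d st)"
    obtain x lam where st: "st = (x, lam)"
      by (cases st)
    obtain y lam' where "st' = (y, lam')"
      by (cases st')
    with \<open>?I st\<close> st' show "?I st'"
      unfolding st using ea_step_invariant[of x lam y lam']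
      by (cases "f x = d") (simp_all add: ea_step_stopped_def)
  next
    fix st
    assume "?I st" "\<not> ?T st"
    moreover obtain x lam where st: "st = (x, lam)"
      by (cases st)
    ultimately have "length x = n" "f x < d" "1 \<le> lam"
      using fitness_le[of x] by auto
    then show "(\<integral>\<^sup>+ st'. ennreal (potential st') \<partial>ea_step_stopped F s mut f d st) + 1 \<le> ennreal (potential st)"
      using potential_drift by (simp add: st ea_step_stopped_def)
  qed (use assms in \<open>auto simp: ea_step_stopped_def nn_integral_return_pmf\<close>)
  then show ?thesis
    by (simp add: expected_gens_def ea_dist_def measure_pmf.emeasure_eq_measure)
qed

lemma potential_le:
  assumes "length x = n"
  shows "potential (x, lam) \<le> runtime_const K * (d + ln (1 / p_min n mut f d))"
proof (cases "f x = d")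
  case True
  have "0 \<le> ln (1 / p_min n mut f d)"
    using p_min_pos p_min_le_1 by simp
  then show ?thesis
    using True runtime_const_nonneg[OF K_nonneg] by (simp add: potential_def)
next
  case False
  let ?L = "ln (1 / p_min n mut f d)"
  have "1 \<le> d"
    using False fitness_le[OF assms] by linarith
  have L: "0 \<le> ?L" "0 \<le> ?L / ln F"
    using p_min_pos p_min_le_1 F_gt_1 by auto
  have "0 \<le> log F (2 * up_factor)"
    using F_gt_1 up_factor_gt_1 by simp
  have "(2 * s + 4) * (real d - f x) \<le> (2 * s + 4) * d"
    "2 * s * lambda_gap (p_min n mut f d) lam \<le> 2 * s * (log F (2 * up_factor) + ?L / ln F)"
    "(2 * s + 4) * d * penalty K \<Lambda> lam \<le> (2 * s + 4) * d * K"
    using s_pos lambda_gap_le[OF p_min_pos p_min_le_1, of lam] penalty_le[OF K_nonneg, of \<Lambda> lam]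
    by (auto intro!: mult_left_mono)
  then have "potential (x, lam) \<le> (2 * s + 4) * d + 2 * s * (log F (2 * up_factor) + ?L / ln F) + (2 * s + 4) * d * K"
    using False by (simp add: potential_def lambda_potential_def)
  also have "\<dots> \<le> (2 * s + 4) * (1 + K) * d + 2 * s * log F (2 * up_factor) * d + 2 * s / ln F * ?L"
    using \<open>1 \<le> d\<close> \<open>0 \<le> log F (2 * up_factor)\<close> s_pos
      mult_left_mono[of 1 "real d" "2 * s * log F (2 * up_factor)"]
    by (simp add: algebra_simps)
  also have "\<dots> \<le> runtime_const K * (d + ?L)"
    using s_pos K_nonneg L \<open>0 \<le> log F (2 * up_factor)\<close> F_gt_1
    by (simp add: runtime_const_def algebra_simps)
  finally show ?thesis .
qed

lemma expected_gens_le: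
  assumes "length x0 = n" "1 \<le> lam0"
  shows "expected_gens F s mut f d x0 lam0 \<le> ennreal (runtime_const K * (d + ln (1 / p_min n mut f d)))"
  using expected_gens_le_potential[OF assms] potential_le[OF assms(1)] ennreal_leI order.trans by blast

end

theorem theorem3p1:
  fixes F s :: real
    and p :: "nat \<Rightarrow> real"
    and mut :: "nat \<Rightarrow> bool list \<Rightarrow> bool list pmf"
    and f :: "nat \<Rightarrow> bool list \<Rightarrow> nat"
    and d :: "nat \<Rightarrow> nat"
  assumes F: "F > 1" and s: "s > 0"
    and mutation:
      "((\<forall>n x. mut n x = std_bit_mut (p n) x)
          \<and> p \<in> O(\<lambda>n. 1 / real n)
          \<and> (\<exists>k. \<forall>\<^sub>F n in sequentially. p n \<ge> real n powr (- k)))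
       \<or> (\<exists>\<beta>>1. \<forall>n x. mut n x = heavy_tailed_mut \<beta> x)"
    and fitness_values: "\<And>n. f n ` {x. length x = n} = {0..d n}"
    and everywhere_hard:
      "\<exists>\<epsilon>. 0 < \<epsilon> \<and> \<epsilon> < 1 \<and>
         (\<lambda>n. p_max n (mut n) (f n) (d n)) \<in> O(\<lambda>n. real n powr (- \<epsilon>))"
    and few_values: "(\<lambda>n. ln (real (d n + 1))) \<in> o(\<lambda>n. (ln (real n))\<^sup>2)"
  shows "\<exists>C N. \<forall>n \<ge> N. \<forall>x0 lam0. length x0 = n \<longrightarrow> lam0 \<ge> 1 \<longrightarrow>
           expected_gens F s (mut n) (f n) (d n) x0 lam0
             \<le> ennreal (C * (real (d n) + ln (1 / p_min n (mut n) (f n) (d n))))"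
proof -
  interpret ea_params F s
    using F s by unfold_locales
  obtain c where mut: "\<forall>\<^sub>F n in sequentially. mutation_operator n c (mut n)"
    using eventually_mutation_operator[OF mutation] by blast
  then have "0 < c" "c < 1"
    by (auto simp: eventually_sequentially intro: mutation_operator.c_pos mutation_operator.c_less_1)
  then obtain K where K: "0 \<le> K" "\<And>\<mu>. 1 \<le> \<mu> \<Longrightarrow> (1 - c) powr (\<mu> / 2) \<le> \<kappa> * K * exp (- \<theta> * (ln \<mu>)\<^sup>2) / 4"
    using exists_penalty_scale by blast
  obtain \<epsilon> where "0 < \<epsilon>" and hard: "(\<lambda>n. p_max n (mut n) (f n) (d n)) \<in> O(\<lambda>n. real n powr (- \<epsilon>))"
    using everywhere_hard by blast
  from eventually_conj[OF mut eventually_exists_threshold[OF \<open>0 < \<epsilon>\<close> hard few_values, of K]]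
  obtain N where N: "\<And>n. N \<le> n \<Longrightarrow> mutation_operator n c (mut n) \<and> (\<exists>\<Lambda>. F \<le> \<Lambda>
      \<and> \<Lambda>\<^sup>2 * p_max n (mut n) (f n) (d n) \<le> \<kappa> / 16
      \<and> 2 * K * d n * exp (- \<theta> * (ln (\<Lambda> / F))\<^sup>2) \<le> 1 / (2 * s + 4))"
    by (auto simp: eventually_sequentially)
  show ?thesis
  proof (intro exI allI impI)
    fix n :: nat and x0 :: "bool list" and lam0 :: real
    assume "N \<le> n" "length x0 = n" "1 \<le> lam0"
    with N obtain \<Lambda> where "mutation_operator n c (mut n)" "F \<le> \<Lambda>"
      "\<Lambda>\<^sup>2 * p_max n (mut n) (f n) (d n) \<le> \<kappa> / 16"
      "2 * K * d n * exp (- \<theta> * (ln (\<Lambda> / F))\<^sup>2) \<le> 1 / (2 * s + 4)"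
      by blast
    then interpret ea_drift F s n c "mut n" "f n" "d n" K \<Lambda>
      using fitness_values K by (intro ea_drift.intro ea_params_axioms ea_drift_axioms.intro) auto
    show "expected_gens F s (mut n) (f n) (d n) x0 lam0
        \<le> ennreal (runtime_const K * (real (d n) + ln (1 / p_min n (mut n) (f n) (d n))))"
      using expected_gens_le \<open>length x0 = n\<close> \<open>1 \<le> lam0\<close> by blast
  qed
qed

end
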